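(* Fix $\mu \in \mathcal{X}$ and let $P_X$ be a probability distribution on $\mathcal{X}$ with $P_X(\{ \mu \}) = 0$. Let $(\mu_n)$ be a sequence in $\mathcal{X}$ with $d(\mu_n, \mu) \to 0$. Then $D(\mu_n; P_X) \to D(\mu; P_X)$ as $n \to \infty$.
   Context: $(\mathcal{X}, d)$ is a complete separable metric space with its Borel $\sigma$-algebra. Define $h: \mathcal{X}^3 \to \mathbb{R}$ by $h(x_1, x_2, x_3) := \mathbb{I}( x_3 \notin \{x_1, x_2\} ) \dfrac{ d^2(x_1, x_3) + d^2(x_2, x_3) - d^2(x_1, x_2) }{d(x_1, x_3)\, d(x_2, x_3) }$, where $h := 0$ when $x_3 \in \{x_1,x_2\}$. The metric spatial depth of $\mu \in \mathcal{X}$ with respect to a probability distribution $P_X$ on $\mathcal{X}$ is $D(\mu; P_X) := 1 - \frac{1}{2} \mathrm{E} \{ h(X_1, X_2, \mu) \}$, where $X_1, X_2 \sim P_X$ are independent. *)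

theory Defs
  imports "HOL-Probability.Probability"
begin

definition msd_h :: "'a::metric_space \<Rightarrow> 'a \<Rightarrow> 'a \<Rightarrow> real" where
  "msd_h x1 x2 x3 =
     (if x3 \<in> {x1, x2} then 0
      else (dist x1 x3 ^ 2 + dist x2 x3 ^ 2 - dist x1 x2 ^ 2) / (dist x1 x3 * dist x2 x3))"

definition msd_depth :: "'a::metric_space measure \<Rightarrow> 'a \<Rightarrow> real" where
  "msd_depth P \<mu> = 1 - (1/2) * (\<integral>z. msd_h (fst z) (snd z) \<mu> \<partial>(P \<Otimes>\<^sub>M P))"

end

theory Submission
  imports Defs
begin

text \<open>Off the singularities the kernel h is continuous in its third argument, and by the
  triangle inequality it is bounded by 2 in absolute value (it is twice the cosine of the
  angle at x3 in a comparison triangle). If the distribution puts no mass on \<mu>, then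
  P \<Otimes> P-almost every pair (x1, x2) avoids \<mu>, so h(x1, x2, \<mu>_n) \<rightarrow> h(x1, x2, \<mu>) almost
  surely, and dominated convergence gives the continuity of the depth.\<close>

lemma abs_law_of_cosines_le:
  fixes a b c :: real
  assumes "0 \<le> c" "c \<le> a + b" "a \<le> b + c" "b \<le> a + c"
  shows "\<bar>a\<^sup>2 + b\<^sup>2 - c\<^sup>2\<bar> \<le> 2 * a * b"
proof -
  have "c\<^sup>2 \<le> (a + b)\<^sup>2" using assms(1,2) by (simp add: power_mono)
  moreover have "(a - b)\<^sup>2 \<le> c\<^sup>2" using assms by (simp add: abs_le_square_iff[symmetric])
  ultimately show ?thesis by (auto simp: power2_eq_square algebra_simps abs_le_iff)
qed

lemma abs_msd_h_le: "\<bar>msd_h x1 x2 (x3::'a::metric_space)\<bar> \<le> 2"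
proof (cases "x3 \<in> {x1, x2}")
  case True
  then show ?thesis by (simp add: msd_h_def)
next
  case False
  then have pos: "dist x1 x3 * dist x2 x3 > 0" by auto
  have "\<bar>(dist x1 x3)\<^sup>2 + (dist x2 x3)\<^sup>2 - (dist x1 x2)\<^sup>2\<bar> \<le> 2 * dist x1 x3 * dist x2 x3"
    by (intro abs_law_of_cosines_le) (metis dist_commute dist_triangle zero_le_dist)+
  with False pos show ?thesis by (simp add: msd_h_def abs_divide divide_le_eq)
qed

lemma isCont_msd_h:
  fixes x1 x2 x3 :: "'a::metric_space"
  assumes "x3 \<notin> {x1, x2}"
  shows "isCont (msd_h x1 x2) x3"
proof -
  let ?g = "\<lambda>y. ((dist x1 y)\<^sup>2 + (dist x2 y)\<^sup>2 - (dist x1 x2)\<^sup>2) / (dist x1 y * dist x2 y)"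
  have "\<forall>\<^sub>F y in nhds x3. y \<in> - {x1, x2}"
    using assms by (intro eventually_nhds_in_open) auto
  then have "\<forall>\<^sub>F y in nhds x3. msd_h x1 x2 y = ?g y"
    by eventually_elim (simp add: msd_h_def)
  moreover have "isCont ?g x3"
    using assms by (intro continuous_intros) auto
  ultimately show ?thesis by (simp add: isCont_cong)
qed

lemma borel_measurable_msd_h:
  "(\<lambda>z. msd_h (fst z) (snd z) m) \<in> borel_measurable (borel :: ('a::metric_space \<times> 'a) measure)"
proof -
  have S: "{z::'a \<times> 'a. m = fst z \<or> m = snd z} \<in> sets borel"
    by (intro borel_closed closed_Collect_disj closed_Collect_eq continuous_intros)
  have g: "(\<lambda>z::'a \<times> 'a. ((dist (fst z) m)\<^sup>2 + (dist (snd z) m)\<^sup>2 - (dist (fst z) (snd z))\<^sup>2)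
      / (dist (fst z) m * dist (snd z) m)) \<in> borel_measurable borel"
    by (intro borel_measurable_divide borel_measurable_diff borel_measurable_add
        borel_measurable_times borel_measurable_power borel_measurable_continuous_onI continuous_intros)
  have "(\<lambda>z. if z \<in> {z. m = fst z \<or> m = snd z} then 0 else
      ((dist (fst z) m)\<^sup>2 + (dist (snd z) m)\<^sup>2 - (dist (fst z) (snd z))\<^sup>2)
      / (dist (fst z) m * dist (snd z) m)) \<in> borel_measurable borel"
    using S g by (intro measurable_If_set) auto
  then show ?thesis
    unfolding msd_h_def by simp
qed

lemma sets_pair_measure_borel:
  fixes P :: "'a::second_countable_topology measure"
  assumes "sets P = sets borel"
  shows "sets (P \<Otimes>\<^sub>M P) = sets (borel :: ('a \<times> 'a) measure)"
  using sets_pair_measure_cong[OF assms assms] unfolding borel_prod .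

lemma AE_pair_measure_avoids_null_point:
  assumes "sigma_finite_measure M" "{x} \<in> null_sets M"
  shows "AE z in M \<Otimes>\<^sub>M M. fst z \<noteq> x \<and> snd z \<noteq> x"
proof -
  interpret pair_sigma_finite M M using assms(1) by (simp add: pair_sigma_finite_def)
  have "{z \<in> space (M \<Otimes>\<^sub>M M). fst z = x \<or> snd z = x} = ({x} \<times> space M) \<union> (space M \<times> {x})"
    using assms(2) by (auto simp: space_pair_measure dest: null_sets.sets_into_space)
  moreover have "{x} \<times> space M \<in> null_sets (M \<Otimes>\<^sub>M M)" "space M \<times> {x} \<in> null_sets (M \<Otimes>\<^sub>M M)"
    using assms(2) by (auto intro!: times_in_null_sets1 times_in_null_sets2)
  ultimately have "{z \<in> space (M \<Otimes>\<^sub>M M). \<not> (fst z \<noteq> x \<and> snd z \<noteq> x)} \<in> null_sets (M \<Otimes>\<^sub>M M)"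
    by auto
  then show ?thesis by (rule AE_I') auto
qed

lemma integral_msd_h_tendsto:
  fixes M :: "('a::metric_space \<times> 'a) measure"
  assumes "finite_measure M" "sets M = sets borel"
    and "AE z in M. fst z \<noteq> \<mu> \<and> snd z \<noteq> \<mu>" and "\<mu>s \<longlonglongrightarrow> \<mu>"
  shows "(\<lambda>n. \<integral>z. msd_h (fst z) (snd z) (\<mu>s n) \<partial>M) \<longlonglongrightarrow> (\<integral>z. msd_h (fst z) (snd z) \<mu> \<partial>M)"
proof (rule integral_dominated_convergence[where w = "\<lambda>_. 2"])
  have "borel_measurable M = borel_measurable borel"
    using assms(2) by (rule measurable_cong_sets) simp
  with borel_measurable_msd_h
  show "(\<lambda>z. msd_h (fst z) (snd z) \<mu>) \<in> borel_measurable M"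
    and "\<And>n. (\<lambda>z. msd_h (fst z) (snd z) (\<mu>s n)) \<in> borel_measurable M"
    by auto
  show "integrable M (\<lambda>_. 2::real)"
    using assms(1) by (simp add: finite_measure.integrable_const)
  show "AE z in M. (\<lambda>n. msd_h (fst z) (snd z) (\<mu>s n)) \<longlonglongrightarrow> msd_h (fst z) (snd z) \<mu>"
    using assms(3) by eventually_elim (auto intro: isCont_tendsto_compose[OF isCont_msd_h] assms(4))
  show "\<And>n. AE z in M. norm (msd_h (fst z) (snd z) (\<mu>s n)) \<le> 2"
    by (simp add: abs_msd_h_le)
qed

theorem theorem6:
  fixes P :: "'a::polish_space measure" and \<mu> :: 'a and \<mu>s :: "nat \<Rightarrow> 'a"
  assumes "prob_space P"
    and "sets P = sets borel"
    and "measure P {\<mu>} = 0"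
    and "(\<lambda>n. dist (\<mu>s n) \<mu>) \<longlonglongrightarrow> 0"
  shows "(\<lambda>n. msd_depth P (\<mu>s n)) \<longlonglongrightarrow> msd_depth P \<mu>"
proof -
  interpret P: prob_space P by fact
  interpret PP: pair_prob_space P P by unfold_locales
  have "{\<mu>} \<in> null_sets P"
    using assms(2,3) by (simp add: null_sets_def P.emeasure_eq_measure)
  then have "AE z in P \<Otimes>\<^sub>M P. fst z \<noteq> \<mu> \<and> snd z \<noteq> \<mu>"
    by (intro AE_pair_measure_avoids_null_point) unfold_locales
  moreover have "\<mu>s \<longlonglongrightarrow> \<mu>"
    using assms(4) tendsto_dist_iff by blast
  ultimately have "(\<lambda>n. \<integral>z. msd_h (fst z) (snd z) (\<mu>s n) \<partial>(P \<Otimes>\<^sub>M P))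
      \<longlonglongrightarrow> (\<integral>z. msd_h (fst z) (snd z) \<mu> \<partial>(P \<Otimes>\<^sub>M P))"
    using assms(2) by (intro integral_msd_h_tendsto sets_pair_measure_borel) unfold_locales
  then show ?thesis
    unfolding msd_depth_def by (intro tendsto_intros)
qed

end
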